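(* For any $k \ge 1$, the number of Grassmannian permutations of all sizes $m \ge 0$ (the empty permutation of size $0$ included) that avoid $\operatorname{id}_k = 12\cdots k$ is \[ \sum_{m=0}^{2k-2} |\mathcal{G}_m(\operatorname{id}_k)| = C_{k+1} - \binom{k}{2} - 1, \] and there are none of size $m \ge 2k-1$. Here $C_n=\frac{1}{n+1}\binom{2n}{n}$.
   Context: A permutation is Grassmannian if it has at most one descent (one-line notation). $\mathcal{G}_m(\operatorname{id}_k)$ denotes the set of Grassmannian permutations of $[m]$ that avoid (do not contain as an order-isomorphic subsequence) the identity permutation $12\cdots k$. *)

theory Defs
  imports Main "HOL-Library.Sublist"
begin

definition perms_of :: "nat \<Rightarrow> nat list set" where
  "perms_of m = {xs. distinct xs \<and> set xs = {1..m}}"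

text \<open>Descent positions (0-based index i with w(i) > w(i+1)).\<close>
definition descents :: "nat list \<Rightarrow> nat set" where
  "descents xs = {i. Suc i < length xs \<and> xs ! i > xs ! Suc i}"

definition grassmannian :: "nat list \<Rightarrow> bool" where
  "grassmannian xs \<longleftrightarrow> card (descents xs) \<le> 1"

text \<open>xs contains the pattern id_k = 12...k iff it has an increasing subsequence of length k.\<close>
definition contains_id :: "nat \<Rightarrow> nat list \<Rightarrow> bool" where
  "contains_id k xs \<longleftrightarrow> (\<exists>ys. subseq ys xs \<and> length ys = k \<and> sorted_wrt (<) ys)"

definition G :: "nat \<Rightarrow> nat \<Rightarrow> nat list set" where
  "G m k = {xs \<in> perms_of m. grassmannian xs \<and> \<not> contains_id k xs}"

definition catalan :: "nat \<Rightarrow> nat" where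
  "catalan n = ((2 * n) choose n) div (n + 1)"

end

theory Submission
  imports Defs
begin

text \<open>A Grassmannian permutation of \<open>[m]\<close> is the concatenation of two increasing runs, so it is
  determined by the word \<open>w \<in> {True, False}\<^sup>m\<close> recording which values lie in the first run:
  \<open>grass 1 w\<close> lists the positions of \<open>True\<close> and then those of \<open>False\<close>. This encoding is a
  bijection except that the \<open>m + 1\<close> words \<open>True\<^sup>a False\<^sup>m\<^sup>-\<^sup>a\<close> all give the identity.
  The longest increasing subsequence of \<open>grass 1 w\<close> has a simple recursive length \<open>lis w\<close>, which
  is at least the number of \<open>True\<close>s and of \<open>False\<close>s; so avoiding \<open>id\<^sub>k\<close> forces
  \<open>m \<le> 2k - 2\<close>. Counting the words with \<open>lis w \<le> c\<close> and at most \<open>d\<close> letters \<open>False\<close>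
  gives a ballot-number recursion, whose value on the diagonal is \<open>C\<^sub>c\<^sub>+\<^sub>2 - 1\<close>. Removing
  the duplicated identities, \<open>m\<close> of them for each \<open>m < k\<close>, subtracts \<open>k choose 2\<close>.\<close>

section \<open>Grassmannian permutations encoded by words\<close>

fun positions :: "bool \<Rightarrow> nat \<Rightarrow> bool list \<Rightarrow> nat list" where
  "positions c n [] = []"
| "positions c n (b # w) = (if b = c then n # positions c (Suc n) w else positions c (Suc n) w)"

definition grass :: "nat \<Rightarrow> bool list \<Rightarrow> nat list" where
  "grass n w = positions True n w @ positions False n w"

lemma mem_positions:
  "v \<in> set (positions c n w) \<longleftrightarrow> n \<le> v \<and> v < n + length w \<and> w ! (v - n) = c"
proof (induction w arbitrary: n)
  case (Cons b w)
  show ?case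
  proof (cases "v \<le> n")
    case True
    then show ?thesis using Cons[of "Suc n"] by (cases "v = n") auto
  next
    case False
    then obtain j where "v = Suc n + j" by (metis add_Suc less_imp_Suc_add not_le)
    then show ?thesis using Cons[of "Suc n"] by simp
  qed
qed simp

lemma sorted_positions: "sorted_wrt (<) (positions c n w)"
  by (induction w arbitrary: n) (auto simp: mem_positions)

lemma length_positions: "length (positions c n w) = count_list w c"
  by (induction w arbitrary: n) auto

lemma distinct_grass: "distinct (grass n w)"
  using sorted_positions by (auto simp: grass_def strict_sorted_iff mem_positions)

lemma set_grass: "set (grass n w) = {n..<n + length w}"
  by (auto simp: grass_def mem_positions)

lemma grass_in_perms_of: "grass 1 w \<in> perms_of (length w)"
  using distinct_grass set_grass by (auto simp: perms_of_def)

lemma descents_append_sorted: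
  assumes "sorted_wrt (<) as" "sorted_wrt (<) bs" "d \<in> descents (as @ bs)"
  shows "Suc d = length as"
proof -
  from assms(3) have d: "Suc d < length as + length bs" "(as @ bs) ! Suc d < (as @ bs) ! d"
    by (auto simp: descents_def)
  consider "Suc d < length as" | "length as \<le> d" | "Suc d = length as" by linarith
  then show ?thesis
  proof cases
    case 1
    with d assms(1) show ?thesis by (simp add: nth_append sorted_wrt_nth_less less_not_sym)
  next
    case 2
    with d assms(2) show ?thesis by (simp add: nth_append sorted_wrt_nth_less less_not_sym Suc_diff_le)
  qed
qed

lemma grassmannian_append_sorted:
  assumes "sorted_wrt (<) as" "sorted_wrt (<) bs"
  shows "grassmannian (as @ bs)"
proof -
  have "descents (as @ bs) \<subseteq> {length as - 1}"
    using descents_append_sorted[OF assms] by force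
  then have "card (descents (as @ bs)) \<le> card {length as - 1}"
    by (intro card_mono) auto
  then show ?thesis by (simp add: grassmannian_def)
qed

lemma grassmannian_grass: "grassmannian (grass n w)"
  unfolding grass_def by (intro grassmannian_append_sorted sorted_positions)

section \<open>Increasing subsequences\<close>

lemma contains_id_0 [simp]: "contains_id 0 xs"
  unfolding contains_id_def by auto

lemma contains_id_Nil_iff [simp]: "contains_id k [] \<longleftrightarrow> k = 0"
  unfolding contains_id_def by auto

lemma contains_id_mono: "contains_id k xs \<Longrightarrow> subseq xs ys \<Longrightarrow> contains_id k ys"
  unfolding contains_id_def using subseq_order.trans by blast

lemma contains_id_Cons_min:
  assumes "\<forall>x\<in>set xs. n < x"
  shows "contains_id (Suc k) (n # xs) \<longleftrightarrow> contains_id k xs"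
proof
  assume "contains_id (Suc k) (n # xs)"
  then obtain y ys where ys: "subseq (y # ys) (n # xs)" "length ys = k" "sorted_wrt (<) ys"
    unfolding contains_id_def by (metis Suc_length_conv sorted_wrt.simps(2))
  then have "subseq ys xs"
    by (metis subseq_Cons' subseq_Cons2_iff)
  with ys show "contains_id k xs" unfolding contains_id_def by blast
next
  assume "contains_id k xs"
  then obtain ys where ys: "subseq ys xs" "length ys = k" "sorted_wrt (<) ys"
    unfolding contains_id_def by blast
  then have "sorted_wrt (<) (n # ys)"
    using assms by (auto dest: list_emb_set)
  with ys show "contains_id (Suc k) (n # xs)"
    unfolding contains_id_def by (metis length_Cons subseq_Cons2)
qed

lemma set_subseq: "subseq xs ys \<Longrightarrow> set xs \<subseteq> set ys"
  by (induction rule: list_emb.induct) auto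

lemma subseq_Cons_append_notin:
  "subseq (x # xs) (as @ ys) \<Longrightarrow> x \<notin> set as \<Longrightarrow> subseq (x # xs) ys"
  by (induction as) (auto split: if_splits)

lemma contains_id_insert_min:
  assumes "\<forall>x\<in>set as. n < x" "\<forall>x\<in>set bs. n < x" "sorted_wrt (<) bs"
  shows "contains_id k (as @ n # bs) \<longleftrightarrow> contains_id k (as @ bs) \<or> k \<le> Suc (length bs)"
proof
  assume "contains_id k (as @ n # bs)"
  then obtain ys where ys: "subseq ys (as @ n # bs)" "length ys = k" "sorted_wrt (<) ys"
    unfolding contains_id_def by blast
  show "contains_id k (as @ bs) \<or> k \<le> Suc (length bs)"
  proof (cases "n \<in> set ys")
    case False
    have "subseq (filter (\<lambda>x. x \<noteq> n) ys) (filter (\<lambda>x. x \<noteq> n) (as @ n # bs))"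
      using ys(1) by (rule subseq_filter)
    moreover have "filter (\<lambda>x. x \<noteq> n) as = as" "filter (\<lambda>x. x \<noteq> n) bs = bs"
      using assms(1,2) by (auto simp: filter_id_conv)
    moreover have "filter (\<lambda>x. x \<noteq> n) ys = ys"
      using False by (auto simp: filter_id_conv)
    ultimately have "subseq ys (as @ bs)"
      by simp
    with ys show ?thesis unfolding contains_id_def by blast
  next
    case True
    \<comment> \<open>\<open>n\<close> is the least entry, so the increasing sequence \<open>ys\<close> must start with it\<close>
    obtain y ys' where ys': "ys = y # ys'"
      using True by (cases ys) auto
    have "n \<le> y"
      using set_subseq[OF ys(1)] assms(1,2) ys' by (auto simp: less_imp_le)
    moreover have "y \<le> n"
      using True ys(3) ys' by (auto simp: less_imp_le)
    ultimately have ys': "ys = n # ys'"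
      using ys' by simp
    have "n \<notin> set as" using assms(1) by blast
    then have "subseq ys' bs"
      using subseq_Cons_append_notin ys(1) ys' by fastforce
    then show ?thesis using ys(2) ys' by (auto dest: list_emb_length)
  qed
next
  assume "contains_id k (as @ bs) \<or> k \<le> Suc (length bs)"
  then show "contains_id k (as @ n # bs)"
  proof
    assume "contains_id k (as @ bs)"
    moreover have "subseq (as @ bs) (as @ n # bs)"
      by (auto simp: subseq_append' intro: list_emb_Cons)
    ultimately show ?thesis by (rule contains_id_mono)
  next
    assume k: "k \<le> Suc (length bs)"
    show ?thesis
    proof (cases k)
      case (Suc j)
      then have "length (n # take j bs) = k" using k by auto
      moreover have "sorted_wrt (<) (n # take j bs)"
        using assms(2,3) by (auto dest: in_set_takeD intro: sorted_wrt_take)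
      moreover have "subseq (n # take j bs) (as @ n # bs)"
        by (intro list_emb_append2 subseq_Cons2 prefix_imp_subseq take_is_prefix)
      ultimately show ?thesis unfolding contains_id_def by blast
    qed simp
  qed
qed

lemma contains_id_length: "contains_id k xs \<Longrightarrow> k \<le> length xs"
  unfolding contains_id_def using list_emb_length by blast

lemma contains_id_length_sorted: "sorted_wrt (<) xs \<Longrightarrow> contains_id (length xs) xs"
  unfolding contains_id_def by blast

text \<open>\<open>lis w\<close> is the length of a longest increasing subsequence of \<open>grass n w\<close>:
  a leading \<open>True\<close> puts the least value \<open>n\<close> in front of everything,
  a leading \<open>False\<close> puts it in front of the second run only.\<close>

fun lis :: "bool list \<Rightarrow> nat" where
  "lis [] = 0"
| "lis (b # w) = (if b then Suc (lis w) else max (Suc (count_list w False)) (lis w))"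

lemma contains_id_grass_iff: "contains_id k (grass n w) \<longleftrightarrow> k \<le> lis w"
proof (induction w arbitrary: n k)
  case (Cons b w)
  show ?case
  proof (cases b)
    case True
    have "\<forall>x\<in>set (grass (Suc n) w). n < x"
      by (simp add: set_grass)
    then show ?thesis
      using True Cons.IH contains_id_Cons_min by (cases k) (simp_all add: grass_def)
  next
    case False
    have "\<forall>x\<in>set (positions c (Suc n) w). n < x" for c
      by (simp add: mem_positions)
    then show ?thesis
      using False Cons.IH[of k "Suc n"]
      by (auto simp: grass_def contains_id_insert_min sorted_positions length_positions)
  qed
qed (simp add: grass_def)

lemma count_list_le_lis: "count_list w b \<le> lis w"
  by (induction w) auto

lemma length_eq_count_True_False: "length w = count_list w True + count_list w False"
  by (induction w) auto

lemma length_grass: "length (grass n w) = length w"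
  by (simp add: grass_def length_positions length_eq_count_True_False)

lemma length_le_double_lis: "length w \<le> 2 * lis w"
  using length_eq_count_True_False[of w] count_list_le_lis[of w True] count_list_le_lis[of w False]
  by linarith

lemma lis_le_length: "lis w \<le> length w"
  using contains_id_grass_iff[of "lis w" 0 w] contains_id_length by (fastforce simp: length_grass)

text \<open>\<open>sorted_wrt (\<lambda>x y. y \<longrightarrow> x) w\<close>, the simp normal form of \<open>sorted_wrt (\<ge>) w\<close>,
  says that \<open>w\<close> consists of some \<open>True\<close>s followed by some \<open>False\<close>s.\<close>

lemma sorted_grass_iff: "sorted_wrt (<) (grass n w) \<longleftrightarrow> sorted_wrt (\<lambda>x y. y \<longrightarrow> x) w"
proof
  assume sorted: "sorted_wrt (<) (grass n w)"
  show "sorted_wrt (\<lambda>x y. y \<longrightarrow> x) w"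
    unfolding sorted_wrt_iff_nth_less
  proof (intro allI impI)
    fix i j assume "i < j" "j < length w" "w ! j"
    show "w ! i"
    proof (rule ccontr)
      assume "\<not> w ! i"
      then have "n + j \<in> set (positions True n w)" "n + i \<in> set (positions False n w)"
        using \<open>i < j\<close> \<open>j < length w\<close> \<open>w ! j\<close> by (auto simp: mem_positions)
      then show False
        using sorted \<open>i < j\<close> by (fastforce simp: grass_def sorted_wrt_append)
    qed
  qed
next
  assume antitone: "sorted_wrt (\<lambda>x y. y \<longrightarrow> x) w"
  have "x < y" if "x \<in> set (positions True n w)" "y \<in> set (positions False n w)" for x y
  proof (rule ccontr)
    assume "\<not> x < y"
    moreover have "x \<noteq> y"
      using that by (auto simp: mem_positions)
    ultimately have "y - n < x - n" "x - n < length w" "w ! (x - n)" "\<not> w ! (y - n)"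
      using that by (auto simp: mem_positions)
    then show False
      using antitone by (auto simp: sorted_wrt_iff_nth_less)
  qed
  then show "sorted_wrt (<) (grass n w)"
    by (simp add: grass_def sorted_wrt_append sorted_positions)
qed

lemma descents_empty_iff_sorted:
  assumes "distinct xs"
  shows "descents xs = {} \<longleftrightarrow> sorted_wrt (<) xs"
proof -
  have "xs ! i \<noteq> xs ! Suc i" if "Suc i < length xs" for i
    using assms that by (simp add: nth_eq_iff_index_eq)
  then show ?thesis
    by (auto simp: descents_def sorted_wrt_iff_nth_Suc_transp linorder_neq_iff)
qed

lemma grass_antitone: "sorted_wrt (\<lambda>x y. y \<longrightarrow> x) w \<Longrightarrow> grass n w = [n..<n + length w]"
  using sorted_grass_iff set_grass by (metis sorted_wrt_upt set_upt strict_sorted_equal)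

lemma lis_antitone:
  assumes "sorted_wrt (\<lambda>x y. y \<longrightarrow> x) w"
  shows "lis w = length w"
proof -
  have "contains_id (length w) (grass 0 w)"
    using contains_id_length_sorted[of "grass 0 w"] assms by (simp add: sorted_grass_iff length_grass)
  then show ?thesis
    using lis_le_length contains_id_grass_iff by (simp add: le_antisym)
qed

lemma finite_words_of_length: "finite {w :: bool list. length w = m \<and> P w}"
  by (rule finite_subset[OF _ finite_lists_length_eq[of "UNIV :: bool set" m]]) auto

lemma card_antitone_words:
  "card {w :: bool list. length w = m \<and> sorted_wrt (\<lambda>x y. y \<longrightarrow> x) w} = Suc m"
proof (induction m)
  case 0
  have "{w :: bool list. length w = 0 \<and> sorted_wrt (\<lambda>x y. y \<longrightarrow> x) w} = {[]}" by auto
  then show ?case by simp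
next
  case (Suc m)
  let ?A = "\<lambda>m. {w :: bool list. length w = m \<and> sorted_wrt (\<lambda>x y. y \<longrightarrow> x) w}"
  have eq: "?A (Suc m) = insert (replicate (Suc m) False) (Cons True ` ?A m)"
  proof (intro set_eqI iffI)
    fix w assume "w \<in> ?A (Suc m)"
    then obtain b u where w: "w = b # u" "length u = m" "sorted_wrt (\<lambda>x y. y \<longrightarrow> x) (b # u)"
      by (cases w) auto
    show "w \<in> insert (replicate (Suc m) False) (Cons True ` ?A m)"
    proof (cases b)
      case True
      then show ?thesis using w by auto
    next
      case False
      then have "\<forall>x\<in>set u. \<not> x"
        using w(3) by auto
      then have "u = replicate m False"
        using w(2) by (auto intro: replicate_eqI)
      then show ?thesis using False w(1) by simp
    qed
  next
    fix w assume "w \<in> insert (replicate (Suc m) False) (Cons True ` ?A m)"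
    moreover have "sorted_wrt (\<lambda>x y. y \<longrightarrow> x) (replicate k False)" for k
      by (induction k) auto
    ultimately show "w \<in> ?A (Suc m)" by auto
  qed
  have "finite (?A m)"
    by (rule finite_words_of_length)
  then have "card (insert (replicate (Suc m) False) (Cons True ` ?A m)) = Suc (card (?A m))"
    by (subst card_insert_disjoint) (auto simp: card_image)
  then show ?case
    using Suc eq by simp
qed

lemma positions_True_eq_take_descent:
  "d \<in> descents (grass n w) \<Longrightarrow> positions True n w = take (Suc d) (grass n w)"
  using descents_append_sorted[OF sorted_positions sorted_positions] by (simp add: grass_def)

lemma positions_True_inj:
  assumes "positions True n w = positions True n w'" "length w = length w'"
  shows "w = w'"
proof (rule nth_equalityI)
  fix i assume "i < length w"
  then show "w ! i = w' ! i"
    using assms mem_positions[of "n + i" True n w] mem_positions[of "n + i" True n w'] by simp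
qed (fact assms(2))

lemma grass_inj_on_descents:
  "inj_on (grass n) {w. length w = m \<and> descents (grass n w) \<noteq> {}}"
proof (rule inj_onI)
  fix w w' assume w: "w \<in> {w. length w = m \<and> descents (grass n w) \<noteq> {}}"
    and w': "w' \<in> {w. length w = m \<and> descents (grass n w) \<noteq> {}}"
    and eq: "grass n w = grass n w'"
  then obtain d where "d \<in> descents (grass n w)" by blast
  then have "positions True n w = positions True n w'"
    using eq by (metis positions_True_eq_take_descent)
  with w w' show "w = w'" by (simp add: positions_True_inj)
qed

lemma grass_split:
  assumes "distinct (as @ bs)" "set (as @ bs) = {n..<n + m}"
    and "sorted_wrt (<) as" "sorted_wrt (<) bs"
  shows "grass n (map (\<lambda>v. v \<in> set as) [n..<n + m]) = as @ bs"
proof -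
  let ?w = "map (\<lambda>v. v \<in> set as) [n..<n + m]"
  have as: "set as \<subseteq> {n..<n + m}" and bs: "set bs = {n..<n + m} - set as"
    using assms(1,2) by auto
  have "?w ! (v - n) \<longleftrightarrow> v \<in> set as" if "n \<le> v" "v < n + m" for v
    using that by (simp add: nth_upt le_add_diff_inverse less_diff_conv2)
  then have "v \<in> set (positions c n ?w) \<longleftrightarrow> v \<in> {n..<n + m} \<and> (v \<in> set as) = c" for v c
    by (auto simp: mem_positions)
  then have "set (positions True n ?w) = set as" "set (positions False n ?w) = set bs"
    using as bs by auto
  then have "positions True n ?w = as" "positions False n ?w = bs"
    using assms(3,4) sorted_positions by (metis strict_sorted_equal)+
  then show ?thesis
    by (simp add: grass_def)
qed

lemma grassmannian_perm_eq_grass: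
  assumes "xs \<in> perms_of m" "grassmannian xs"
  obtains w where "length w = m" "grass 1 w = xs"
proof -
  have distinct: "distinct xs" and set: "set xs = {1..<1 + m}"
    using assms(1) unfolding perms_of_def by (auto simp: atLeastLessThanSuc_atLeastAtMost)
  have finite: "finite (descents xs)"
    by (rule finite_subset[of _ "{..<length xs}"]) (auto simp: descents_def)
  have card: "card (descents xs) \<le> Suc 0"
    using assms(2) by (simp add: grassmannian_def)
  obtain p where p: "p \<le> length xs" "\<And>d. d \<in> descents xs \<Longrightarrow> Suc d = p"
  proof (cases "descents xs = {}")
    case False
    then obtain d where d: "d \<in> descents xs" by blast
    then have "e = d" if "e \<in> descents xs" for e
      using that finite card card_le_Suc0_iff_eq by blast
    moreover have "Suc d \<le> length xs"
      using d by (simp add: descents_def)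
    ultimately show thesis
      using that[of "Suc d"] by blast
  qed (use that[of "length xs"] in blast)
  have "d \<notin> descents (take p xs)" "d \<notin> descents (drop p xs)" for d
    using p(1) p(2)[of d] p(2)[of "p + d"] by (auto simp: descents_def) linarith
  then have "descents (take p xs) = {}" "descents (drop p xs) = {}"
    by blast+
  then have "sorted_wrt (<) (take p xs)" "sorted_wrt (<) (drop p xs)"
    using distinct by (simp_all add: descents_empty_iff_sorted)
  then have "grass 1 (map (\<lambda>v. v \<in> set (take p xs)) [1..<1 + m]) = xs"
    using grass_split[of "take p xs" "drop p xs", unfolded append_take_drop_id, OF distinct set]
    by blast
  then show thesis
    using that[of "map (\<lambda>v. v \<in> set (take p xs)) [1..<1 + m]"] by (simp del: upt_Suc)
qed

lemma G_eq_grass_image: "G m k = grass 1 ` {w. length w = m \<and> lis w < k}"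
proof
  show "G m k \<subseteq> grass 1 ` {w. length w = m \<and> lis w < k}"
  proof
    fix xs assume "xs \<in> G m k"
    then have xs: "xs \<in> perms_of m" "grassmannian xs" "\<not> contains_id k xs"
      by (auto simp: G_def)
    obtain w where "length w = m" "grass 1 w = xs"
      using grassmannian_perm_eq_grass[OF xs(1,2)] by blast
    with xs(3) show "xs \<in> grass 1 ` {w. length w = m \<and> lis w < k}"
      by (auto simp: contains_id_grass_iff)
  qed
next
  show "grass 1 ` {w. length w = m \<and> lis w < k} \<subseteq> G m k"
    using grass_in_perms_of grassmannian_grass by (auto simp: G_def contains_id_grass_iff)
qed

lemma card_G: "card (G m k) + (if m < k then m else 0) = card {w. length w = m \<and> lis w < k}"
proof -
  define W where "W = {w. length w = m \<and> lis w < k}"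
  define A where "A = {w \<in> W. sorted_wrt (\<lambda>x y. y \<longrightarrow> x) w}"
  define D where "D = W - A"
  have "finite W"
    unfolding W_def by (rule finite_words_of_length)
  then have card_W: "card W = card D + card A"
    by (simp add: D_def A_def card_Diff_subset card_mono)
  \<comment> \<open>all antitone words give the identity permutation, the others are distinguished by \<open>grass\<close>\<close>
  have A: "A = (if m < k then {w. length w = m \<and> sorted_wrt (\<lambda>x y. y \<longrightarrow> x) w} else {})"
    using lis_antitone by (auto simp: A_def W_def)
  have card_A: "card (grass 1 ` A) + (if m < k then m else 0) = card A"
  proof (cases "m < k")
    case True
    then have A_eq: "A = {w. length w = m \<and> sorted_wrt (\<lambda>x y. y \<longrightarrow> x) w}"
      by (simp add: A)
    then have "card A = Suc m"
      using card_antitone_words by simp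
    then have "A \<noteq> {}"
      by (intro notI) simp
    moreover have "grass 1 w = [1..<1 + m]" if "w \<in> A" for w
      using that grass_antitone[of w 1] by (simp add: A_eq)
    ultimately have "grass 1 ` A = {[1..<1 + m]}"
      by auto
    then show ?thesis
      using True \<open>card A = Suc m\<close> by simp
  qed (simp add: A)
  have "D \<subseteq> {w. length w = m \<and> descents (grass 1 w) \<noteq> {}}"
    by (auto simp: D_def A_def W_def descents_empty_iff_sorted[OF distinct_grass] sorted_grass_iff)
  then have "inj_on (grass 1) D"
    by (rule inj_on_subset[OF grass_inj_on_descents])
  moreover have "grass 1 ` D \<inter> grass 1 ` A = {}"
    by (auto simp: D_def A_def) (metis sorted_grass_iff)
  moreover have "G m k = grass 1 ` D \<union> grass 1 ` A"
    by (auto simp: G_eq_grass_image W_def D_def A_def)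
  moreover have "finite D" "finite A"
    using \<open>finite W\<close> by (simp_all add: D_def A_def)
  ultimately have "card (G m k) = card D + card (grass 1 ` A)"
    by (simp add: card_Un_disjoint card_image)
  then show ?thesis
    using card_W card_A by (simp add: W_def)
qed

section \<open>Counting words by their longest increasing subsequence\<close>

definition bounded_words :: "nat \<Rightarrow> nat \<Rightarrow> bool list set" where
  "bounded_words c d = {w. lis w \<le> c \<and> count_list w False \<le> d}"

lemma finite_bounded_words: "finite (bounded_words c d)"
proof (rule finite_subset)
  have "length w \<le> 2 * c" if "lis w \<le> c" for w
    using length_le_double_lis[of w] that by linarith
  then show "bounded_words c d \<subseteq> {w. set w \<subseteq> UNIV \<and> length w \<le> 2 * c}"
    by (auto simp: bounded_words_def)
qed (rule finite_lists_length_le, simp)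

lemma bounded_words_0: "bounded_words 0 d = {[]}"
proof -
  have "w = []" if "lis w = 0" for w
    using length_le_double_lis[of w] that by simp
  then show ?thesis
    by (auto simp: bounded_words_def)
qed

lemma bounded_words_Suc_0: "bounded_words (Suc c) 0 = insert [] (Cons True ` bounded_words c 0)"
proof (intro set_eqI)
  fix w :: "bool list"
  show "w \<in> bounded_words (Suc c) 0 \<longleftrightarrow> w \<in> insert [] (Cons True ` bounded_words c 0)"
    by (cases w) (auto simp: bounded_words_def)
qed

lemma bounded_words_Suc_Suc:
  assumes "d \<le> c"
  shows "bounded_words (Suc c) (Suc d) =
    insert [] (Cons True ` bounded_words c (min (Suc d) c) \<union> Cons False ` bounded_words (Suc c) d)"
proof (intro set_eqI)
  fix w :: "bool list"
  show "w \<in> bounded_words (Suc c) (Suc d) \<longleftrightarrow>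
    w \<in> insert [] (Cons True ` bounded_words c (min (Suc d) c) \<union> Cons False ` bounded_words (Suc c) d)"
    using assms count_list_le_lis[of "tl w" False] by (cases w) (auto simp: bounded_words_def)
qed

lemma card_insert_Nil_Cons:
  assumes "finite X" "finite Y"
  shows "card (insert [] (Cons True ` X \<union> Cons False ` Y)) = Suc (card X + card Y)"
proof -
  have "card (Cons True ` X \<union> Cons False ` Y) = card X + card Y"
    using assms by (subst card_Un_disjoint) (auto simp: card_image)
  then show ?thesis
    using assms by (subst card_insert_disjoint) auto
qed

text \<open>Ballot numbers: they satisfy Pascal's recurrence in both arguments and
  \<open>ballot c (Suc c) = ballot c c\<close> on the diagonal, exactly like the counts of bounded words.\<close>

definition ballot :: "nat \<Rightarrow> nat \<Rightarrow> int" where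
  "ballot c d = int ((c + d + 3) choose Suc d) - int ((c + d + 3) choose d)"

lemma ballot_Suc_Suc: "ballot (Suc c) (Suc d) = ballot c (Suc d) + ballot (Suc c) d"
proof -
  define N where "N = c + d + 4"
  have "Suc c + Suc d + 3 = Suc N" "c + Suc d + 3 = N" "Suc c + d + 3 = N"
    by (simp_all add: N_def)
  then show ?thesis
    unfolding ballot_def by (simp only: binomial_Suc_Suc)
qed

lemma ballot_diagonal: "ballot c (Suc c) = ballot c c"
proof -
  define N where "N = 2 * c + 3"
  have "c + Suc c + 3 = Suc N" "c + c + 3 = N"
    by (simp_all add: N_def)
  moreover have "N choose Suc (Suc c) = N choose Suc c"
    using binomial_symmetric[of "Suc c" N] by (simp add: N_def)
  ultimately show ?thesis
    unfolding ballot_def by (simp only: binomial_Suc_Suc)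
qed

lemma card_bounded_words: "d \<le> c \<Longrightarrow> int (card (bounded_words c d)) + 1 = ballot c d"
proof (induction c arbitrary: d)
  case 0
  then show ?case by (simp add: bounded_words_0 ballot_def)
next
  case (Suc c)
  note IH_c = Suc.IH
  show ?case
    using Suc.prems
  proof (induction d)
    case 0
    have "card (bounded_words (Suc c) 0) = Suc (card (bounded_words c 0))"
      unfolding bounded_words_Suc_0
      by (subst card_insert_disjoint) (auto simp: finite_bounded_words card_image)
    then show ?case
      using IH_c[of 0] by (simp add: ballot_def)
  next
    case (Suc d)
    have "int (card (bounded_words c (min (Suc d) c))) + 1 = ballot c (Suc d)"
    proof (cases "Suc d \<le> c")
      case True
      then show ?thesis using IH_c[of "Suc d"] by simp
    next
      case False
      then have "d = c" using Suc.prems by simp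
      then show ?thesis using IH_c[of c] ballot_diagonal[of c] by simp
    qed
    then show ?case
      using Suc.IH Suc.prems ballot_Suc_Suc[of c d]
      by (simp add: bounded_words_Suc_Suc card_insert_Nil_Cons finite_bounded_words)
  qed
qed

lemma catalan_eq_ballot: "int (catalan (Suc (Suc c))) = ballot c c"
proof -
  define a where "a = (2 * c + 3) choose Suc c"
  define b where "b = (2 * c + 3) choose c"
  have n: "Suc (2 * c + 2) = 2 * c + 3" "2 * c + 3 - c = c + 3" "2 * c + 3 - 1 = 2 * c + 2"
    by simp_all
  have "Suc c * a = (2 * c + 3) * ((2 * c + 2) choose c)"
    using Suc_times_binomial[of c "2 * c + 2"] by (simp only: a_def n)
  moreover have "(c + 3) * b = (2 * c + 3) * ((2 * c + 2) choose c)"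
    using binomial_absorb_comp[of "2 * c + 3" c] by (simp only: b_def n)
  ultimately have ab: "Suc c * a = (c + 3) * b"
    by simp
  have "Suc c * b \<le> (c + 3) * b"
    by (rule mult_right_mono) simp_all
  with ab have "Suc c * b \<le> Suc c * a"
    by simp
  then have "b \<le> a"
    by (rule Suc_mult_le_cancel1[THEN iffD1])
  have "(c + 3) * (a - b) = (c + 3) * a - Suc c * a"
    using ab by (simp add: diff_mult_distrib2)
  also have "\<dots> = (c + 3 - Suc c) * a"
    by (simp only: diff_mult_distrib)
  also have "\<dots> = 2 * a"
    by simp
  also have "\<dots> = Suc (2 * c + 3) choose Suc (Suc c)"
    using binomial_symmetric[of "Suc c" "2 * c + 3"] by (simp only: binomial_Suc_Suc a_def mult_2) simp
  also have "Suc (2 * c + 3) = 2 * Suc (Suc c)"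
    by simp
  finally have central: "(c + 3) * (a - b) = (2 * Suc (Suc c)) choose Suc (Suc c)" .
  have "Suc (Suc c) + 1 = c + 3"
    by simp
  then have "catalan (Suc (Suc c)) = (c + 3) * (a - b) div (c + 3)"
    unfolding catalan_def central[symmetric] by (simp only:)
  also have "\<dots> = a - b"
    by simp
  finally have "int (catalan (Suc (Suc c))) = int a - int b"
    using \<open>b \<le> a\<close> by simp
  moreover have "c + c + 3 = 2 * c + 3"
    by simp
  ultimately show ?thesis
    unfolding ballot_def a_def b_def by (simp only:)
qed

lemma card_lis_le: "card {w. lis w \<le> c} + 1 = catalan (c + 2)"
proof -
  have "bounded_words c c = {w. lis w \<le> c}"
    by (auto simp: bounded_words_def intro: order.trans[OF count_list_le_lis])
  then show ?thesis
    using card_bounded_words[of c c] catalan_eq_ballot[of c] by simp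
qed

lemma sum_lessThan_eq_choose_two: "(\<Sum>m<k. m) = k choose 2"
proof (induction k)
  case (Suc k)
  then show ?case
    using binomial_Suc_Suc[of k 1] by (simp add: numeral_2_eq_2)
qed simp

lemma sum_card_lis_less:
  assumes "1 \<le> k"
  shows "(\<Sum>m = 0..2 * k - 2. card {w. length w = m \<and> lis w < k}) = card {w. lis w < k}"
proof -
  have "length w \<le> 2 * k - 2" if "lis w < k" for w :: "bool list"
    using length_le_double_lis[of w] that by linarith
  then have "{w. lis w < k} = (\<Union>m \<in> {0..2 * k - 2}. {w. length w = m \<and> lis w < k})"
    by auto
  moreover have "finite {w :: bool list. length w = m \<and> lis w < k}" for m
    by (rule finite_words_of_length)
  moreover have "card (\<Union>m \<in> {0..2 * k - 2}. {w. length w = m \<and> lis w < k}) =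
      (\<Sum>m = 0..2 * k - 2. card {w. length w = m \<and> lis w < k})"
    using calculation(2) by (intro card_UN_disjoint) auto
  ultimately show ?thesis
    by simp
qed

lemma sum_if_less_eq_choose_two:
  assumes "k \<le> Suc n"
  shows "(\<Sum>m = 0..n. if m < k then m else 0) = k choose 2"
proof -
  have "{m \<in> {0..n}. m < k} = {..<k}"
    using assms by auto
  then show ?thesis
    using sum.inter_filter[of "{0..n}" "\<lambda>m. m" "\<lambda>m. m < k"] sum_lessThan_eq_choose_two[of k]
    by simp
qed

theorem corollary3p8:
  fixes k :: nat
  assumes "k \<ge> 1"
  shows "int (\<Sum>m = 0..2 * k - 2. card (G m k))
           = int (catalan (k + 1)) - int (k choose 2) - 1
         \<and> (\<forall>m \<ge> 2 * k - 1. G m k = {})"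
proof
  have "G m k = {}" if "m \<ge> 2 * k - 1" for m
  proof -
    have "\<not> (length w = m \<and> lis w < k)" for w
      using length_le_double_lis[of w] that assms by linarith
    then show ?thesis
      by (simp add: G_eq_grass_image)
  qed
  then show "\<forall>m \<ge> 2 * k - 1. G m k = {}"
    by blast
  have "int (\<Sum>m = 0..2 * k - 2. card (G m k)) =
      (\<Sum>m = 0..2 * k - 2. int (card {w. length w = m \<and> lis w < k}) - int (if m < k then m else 0))"
    unfolding of_nat_sum card_G[symmetric] by simp
  also have "\<dots> = int (card {w. lis w < k}) - int (k choose 2)"
    using assms by (simp add: sum_subtractf sum_card_lis_less sum_if_less_eq_choose_two
        flip: of_nat_sum)
  also have "{w. lis w < k} = {w. lis w \<le> k - 1}"
    using assms by auto
  also have "int (card {w. lis w \<le> k - 1}) = int (catalan (k + 1)) - 1"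
    using assms card_lis_le[of "k - 1"] by simp
  finally show "int (\<Sum>m = 0..2 * k - 2. card (G m k)) = int (catalan (k + 1)) - int (k choose 2) - 1"
    by simp
qed

end
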